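(* Let $\mathcal D=\{1,\dots,N\}$, $\boldsymbol\psi_1,\dots,\boldsymbol\psi_N\in\mathbb R^p$, $\mathbf H$ an invertible symmetric $p\times p$ matrix, $n>0$, and consider the family of PO-WR, PO-WOR or MULTI designs with domain $\mathcal M_n$ and $\boldsymbol\Gamma(\boldsymbol\mu)$ as in the context. Let $\Phi:\mathbf S_+^{p\times p}\to\mathbb R$ be monotone for Loewner's ordering and differentiable in its matrix argument with matrix derivative $\boldsymbol\phi$, and assume $\boldsymbol\mu\mapsto\Phi(\boldsymbol\Gamma(\boldsymbol\mu))$ is differentiable in a neighbourhood of $\boldsymbol\mu^*\in\mathcal M_n$. Let $\mathbf L(\boldsymbol\mu^* )$ satisfy $\mathbf L(\boldsymbol\mu^* )\mathbf L(\boldsymbol\mu^* )^{\mathsf T}=\boldsymbol\phi(\boldsymbol\Gamma(\boldsymbol\mu^* ))$ and set $c_i=\|\mathbf L(\boldsymbol\mu^* )^{\mathsf T}\mathbf H^{-1}\boldsymbol\psi_i\|_2^2$, $i\in\mathcal D$. Then: (a) For PO-WR or MULTI, $\boldsymbol\mu^*$ is a stationary point of $\Phi(\boldsymbol\Gamma(\boldsymbol\mu))$ subject to $\boldsymbol\mu\in\mathcal M_n$ (i.e. satisfies the Lagrange conditions for the constraint $\sum_i\mu_i=n$) if $\mu_i^*=n\sqrt{c_i}/\sum_{j\in\mathcal D}\sqrt{c_j}$ for all $i\in\mathcal D$. (b) For PO-WOR, $\boldsymbol\mu^*$ is a stationary point of $\Phi(\boldsymbol\Gamma(\boldsymbol\mu))$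 subject to $\sum_i\mu_i=n$, $\mu_i\le1$ (i.e. satisfies the Karush–Kuhn–Tucker conditions) if, with $\mathcal E=\{i\in\mathcal D:\mu_i^*=1\}$ and $n_{\mathcal E}=|\mathcal E|$: $\mu_i^*\le1$ for all $i\in\mathcal D$; $\mu_i^*=(n-n_{\mathcal E})\sqrt{c_i}/\sum_{j\in\mathcal D\setminus\mathcal E}\sqrt{c_j}$ for all $i\in\mathcal D\setminus\mathcal E$; and $\sqrt{c_i}\ge\sqrt{c_j}/\mu_j^*$ for all $i\in\mathcal E$, $j\in\mathcal D\setminus\mathcal E$. Consequently, if $\boldsymbol\mu^*$ satisfies the condition in (a) or (b) and $\boldsymbol\mu\mapsto\Phi(\boldsymbol\Gamma(\boldsymbol\mu))$ is convex on $\mathcal M_n$, then $\boldsymbol\mu^*$ is a global minimiser of $\Phi(\boldsymbol\Gamma(\boldsymbol\mu))$ over $\mathcal M_n$.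
   Context: Sampling designs (size parameter $n>0$, scheme $\boldsymbol\mu=(\mu_1,\dots,\mu_N)$): PO-WR: $S_i$ independent $\mathrm{Poisson}(\mu_i)$; MULTI: $(S_1,\dots,S_N)\sim\mathrm{Multinomial}(n,\boldsymbol\mu/n)$; for both, $\mathcal M_n=\{\boldsymbol\mu\in\mathbb R^N:\mu_i>0\ \forall i,\ \sum_i\mu_i=n\}$. PO-WOR: $S_i$ independent $\mathrm{Bernoulli}(\mu_i)$, $\mathcal M_n=\{\boldsymbol\mu:\mu_i\in(0,1]\ \forall i,\ \sum_i\mu_i=n\}$. Define $\mathbf V(\boldsymbol\mu)=\sum_{i\in\mathcal D}\mu_i^{-1}\boldsymbol\psi_i\boldsymbol\psi_i^{\mathsf T}$ for PO-WR and MULTI, $\mathbf V(\boldsymbol\mu)=\sum_{i\in\mathcal D}(\mu_i^{-1}-1)\boldsymbol\psi_i\boldsymbol\psi_i^{\mathsf T}$ for PO-WOR, and $\boldsymbol\Gamma(\boldsymbol\mu)=\mathbf H^{-1}\mathbf V(\boldsymbol\mu)\mathbf H^{-1}$. $\mathbf S_+^{p\times p}$: real symmetric positive semi-definite $p\times p$ matrices. $\Phi$ is monotone for Loewner's ordering if $\Phi(\mathbf U)\ge\Phi(\mathbf W)$ whenever $\mathbf U-\mathbf W$ is positive semi-definite. *)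

theory Defs
  imports "HOL-Analysis.Analysis"
begin

datatype design = PO_WR | MULTI | PO_WOR

definition psd :: "real^'p^'p \<Rightarrow> bool" where
  "psd A \<longleftrightarrow> transpose A = A \<and> (\<forall>x. 0 \<le> x \<bullet> (A *v x))"

definition outer :: "real^'p \<Rightarrow> real^'p^'p" where
  "outer x = (\<chi> k l. x $ k * x $ l)"

text \<open>Domain M_n of admissible schemes mu (indexed by the finite population type 'd).\<close>
definition M_dom :: "design \<Rightarrow> real \<Rightarrow> (real^'d) set" where
  "M_dom d n = {\<mu>. (\<forall>i. 0 < \<mu> $ i \<and> (d = PO_WOR \<longrightarrow> \<mu> $ i \<le> 1)) \<and> (\<Sum>i\<in>UNIV. \<mu> $ i) = n}"

definition Vmat :: "design \<Rightarrow> ('d \<Rightarrow> real^'p) \<Rightarrow> real^'d \<Rightarrow> real^'p^'p" where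
  "Vmat d \<psi> \<mu> = (if d = PO_WOR
      then (\<Sum>i\<in>UNIV. (inverse (\<mu> $ i) - 1) *\<^sub>R outer (\<psi> i))
      else (\<Sum>i\<in>UNIV. inverse (\<mu> $ i) *\<^sub>R outer (\<psi> i)))"

definition Gam :: "design \<Rightarrow> real^'p^'p \<Rightarrow> ('d \<Rightarrow> real^'p) \<Rightarrow> real^'d \<Rightarrow> real^'p^'p" where
  "Gam d H \<psi> \<mu> = matrix_inv H ** Vmat d \<psi> \<mu> ** matrix_inv H"

definition loewner_mono :: "(real^'p^'p \<Rightarrow> real) \<Rightarrow> bool" where
  "loewner_mono \<Phi> \<longleftrightarrow> (\<forall>U W. psd U \<and> psd W \<and> psd (U - W) \<longrightarrow> \<Phi> W \<le> \<Phi> U)"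

definition matrix_deriv :: "(real^'p^'p \<Rightarrow> real) \<Rightarrow> (real^'p^'p \<Rightarrow> real^'p^'p) \<Rightarrow> real^'p^'p \<Rightarrow> bool" where
  "matrix_deriv \<Phi> \<phi> U \<longleftrightarrow>
     (\<Phi> has_derivative (\<lambda>W. \<Sum>k\<in>UNIV. \<Sum>l\<in>UNIV. \<phi> U $ k $ l * W $ k $ l)) (at U within {A. psd A})"

definition lagrange_stationary :: "(real^'d \<Rightarrow> real) \<Rightarrow> real^'d \<Rightarrow> bool" where
  "lagrange_stationary f \<mu> \<longleftrightarrow>
     (\<exists>f' lam. (f has_derivative f') (at \<mu>) \<and> (\<forall>i. f' (axis i 1) + lam = 0))"

definition kkt_stationary :: "(real^'d \<Rightarrow> real) \<Rightarrow> real \<Rightarrow> real^'d \<Rightarrow> bool" where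
  "kkt_stationary f n \<mu> \<longleftrightarrow>
     (\<Sum>i\<in>UNIV. \<mu> $ i) = n \<and> (\<forall>i. \<mu> $ i \<le> 1) \<and>
     (\<exists>f' lam \<nu>. (f has_derivative f') (at \<mu>) \<and>
        (\<forall>i. 0 \<le> \<nu> i \<and> \<nu> i * (\<mu> $ i - 1) = 0 \<and> f' (axis i 1) + lam + \<nu> i = 0))"

end

theory Submission
  imports Defs
begin

text \<open>
  With \<open>P\<^sub>i\<close> the outer product of \<open>H\<^sup>-\<^sup>1\<psi>\<^sub>i\<close>, the matrix \<open>\<Gamma>(\<mu>)\<close> is \<open>\<Sum>\<^sub>i w(\<mu>\<^sub>i) P\<^sub>i\<close> with
  \<open>w(x) = 1/x\<close> (PO-WR, MULTI) or \<open>w(x) = 1/x - 1\<close> (PO-WOR), so the chain rule gives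
  \<open>\<partial>\<^sub>i \<Phi>(\<Gamma>(\<mu>)) = -\<langle>\<phi>(\<Gamma>(\<mu>)), P\<^sub>i\<rangle> / \<mu>\<^sub>i\<^sup>2 = -c\<^sub>i / \<mu>\<^sub>i\<^sup>2\<close>. As \<open>\<Phi>\<close> is only differentiable
  relative to the PSD cone, this partial derivative is read off along the segment
  \<open>\<mu> - t e\<^sub>i\<close>, \<open>0 \<le> t \<le> \<mu>\<^sub>i/2\<close>, on which \<open>\<Gamma>\<close> stays PSD.
  The square-root allocation rules make \<open>c\<^sub>i / \<mu>\<^sub>i\<^sup>2\<close> equal to one constant \<open>\<lambda>\<close> off the
  saturated set \<open>E\<close> and at least \<open>\<lambda>\<close> on \<open>E\<close>, which are the Lagrange and the KKT conditions respectively;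
  for a convex objective these first-order conditions and the tangent inequality give
  global minimality.
\<close>

lemma symmetric_matrix_inv:
  fixes H :: "real^'p::finite^'p"
  assumes sym: "transpose H = H" and inv: "invertible H"
  shows "transpose (matrix_inv H) = matrix_inv H"
proof -
  have H: "H ** matrix_inv H = mat 1 \<and> matrix_inv H ** H = mat 1"
    using inv unfolding invertible_def matrix_inv_def by (rule someI_ex)
  then have "H ** transpose (matrix_inv H) = mat 1"
    by (metis sym matrix_transpose_mul transpose_mat)
  then have "matrix_inv H ** (H ** transpose (matrix_inv H)) = matrix_inv H" by simp
  then show ?thesis using H by (simp add: matrix_mul_assoc)
qed

lemma symmetric_mult_outer_mult:
  fixes A :: "real^'p::finite^'p"
  assumes "transpose A = A"
  shows "A ** outer v ** A = outer (A *v v)"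
proof -
  have "A $ k $ l = A $ l $ k" for k l using assms by (metis transpose_def vec_lambda_beta)
  then show ?thesis
    unfolding outer_def matrix_matrix_mult_def matrix_vector_mult_def
    by (simp add: vec_eq_iff sum_distrib_left sum_distrib_right mult_ac)
qed

lemma matrix_add_rdistrib: "(B + C) ** (A::real^'n^'m) = B ** A + C ** A"
  by (simp add: matrix_matrix_mult_def vec_eq_iff sum.distrib[symmetric] field_simps)

lemma matrix_mul_sum_left: "finite I \<Longrightarrow> (A::real^'n^'m) ** (\<Sum>i\<in>I. X i) = (\<Sum>i\<in>I. A ** X i)"
  by (induction I rule: finite_induct) (simp_all add: matrix_add_ldistrib)

lemma matrix_mul_sum_right: "finite I \<Longrightarrow> (\<Sum>i\<in>I. X i) ** (A::real^'n^'m) = (\<Sum>i\<in>I. X i ** A)"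
  by (induction I rule: finite_induct) (simp_all add: matrix_add_rdistrib)

definition design_weight :: "design \<Rightarrow> real \<Rightarrow> real" where
  "design_weight d x = (if d = PO_WOR then inverse x - 1 else inverse x)"

lemma design_weight_nonneg: "0 < x \<Longrightarrow> (d = PO_WOR \<longrightarrow> x \<le> 1) \<Longrightarrow> 0 \<le> design_weight d x"
  by (auto simp: design_weight_def one_le_inverse)

lemma has_field_derivative_design_weight:
  "0 < x \<Longrightarrow> ((\<lambda>t. design_weight d (x + t * e)) has_field_derivative - e / x\<^sup>2) (at 0)"
  unfolding design_weight_def
  by (cases "d = PO_WOR") (auto intro!: derivative_eq_intros simp: power2_eq_square field_simps)

lemma Gam_eq_sum_outer:
  assumes "transpose (matrix_inv H) = matrix_inv H"
  shows "Gam d H \<psi> \<mu> = (\<Sum>i\<in>UNIV. design_weight d (\<mu> $ i) *\<^sub>R outer (matrix_inv H *v \<psi> i))"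
proof -
  have "Vmat d \<psi> \<mu> = (\<Sum>i\<in>UNIV. design_weight d (\<mu> $ i) *\<^sub>R outer (\<psi> i))"
    by (simp add: Vmat_def design_weight_def)
  then show ?thesis
    unfolding Gam_def
    by (simp add: matrix_mul_sum_left matrix_mul_sum_right matrix_scalar_ac
        scalar_matrix_assoc[symmetric] matrix_mul_assoc symmetric_mult_outer_mult[OF assms])
qed

lemma psd_outer: "psd (outer v)"
  unfolding psd_def
proof (intro conjI allI)
  fix x :: "real^'a"
  have "x \<bullet> (outer v *v x) = (v \<bullet> x)\<^sup>2"
    by (simp add: outer_def inner_vec_def matrix_vector_mult_def power2_eq_square
        sum_distrib_left sum_distrib_right mult_ac)
  then show "0 \<le> x \<bullet> (outer v *v x)" by simp
qed (simp add: outer_def transpose_def vec_eq_iff mult.commute)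

lemma psd_scaleR: "psd A \<Longrightarrow> 0 \<le> k \<Longrightarrow> psd (k *\<^sub>R A)"
  unfolding psd_def
  by (simp add: transpose_scalar scaleR_matrix_vector_assoc[symmetric])

lemma psd_add: "psd A \<Longrightarrow> psd B \<Longrightarrow> psd (A + B)"
  unfolding psd_def
  by (simp add: matrix_vector_mult_add_rdistrib inner_add_right transpose_def vec_eq_iff)

lemma psd_sum: "finite I \<Longrightarrow> (\<And>i. i \<in> I \<Longrightarrow> psd (X i)) \<Longrightarrow> psd (\<Sum>i\<in>I. X i)"
  by (induction I rule: finite_induct) (simp_all add: psd_add, simp add: psd_def transpose_def vec_eq_iff)

lemma psd_Gam:
  assumes "transpose (matrix_inv H) = matrix_inv H"
    and "\<And>j. 0 < \<mu> $ j \<and> (d = PO_WOR \<longrightarrow> \<mu> $ j \<le> 1)"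
  shows "psd (Gam d H \<psi> \<mu>)"
  unfolding Gam_eq_sum_outer[OF assms(1)]
  using assms(2) by (intro psd_sum psd_scaleR psd_outer design_weight_nonneg) auto

lemma frobenius_mult_transpose_outer:
  fixes L :: "real^'q::finite^'p::finite"
  shows "(\<Sum>k\<in>UNIV. \<Sum>l\<in>UNIV. (L ** transpose L) $ k $ l * outer a $ k $ l) = (norm (transpose L *v a))\<^sup>2"
proof -
  have "(\<Sum>k\<in>UNIV. \<Sum>l\<in>UNIV. (L ** transpose L) $ k $ l * outer a $ k $ l)
      = (\<Sum>k\<in>UNIV. \<Sum>l\<in>UNIV. \<Sum>q\<in>UNIV. L$k$q * a$k * (L$l$q * a$l))"
    by (simp add: outer_def matrix_matrix_mult_def transpose_def sum_distrib_left mult_ac)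
  also have "\<dots> = (\<Sum>k\<in>UNIV. \<Sum>q\<in>UNIV. \<Sum>l\<in>UNIV. L$k$q * a$k * (L$l$q * a$l))"
    by (intro sum.cong refl sum.swap)
  also have "\<dots> = (\<Sum>q\<in>UNIV. \<Sum>k\<in>UNIV. \<Sum>l\<in>UNIV. L$k$q * a$k * (L$l$q * a$l))"
    by (rule sum.swap)
  also have "\<dots> = (\<Sum>q\<in>UNIV. (\<Sum>k\<in>UNIV. L$k$q * a$k) * (\<Sum>l\<in>UNIV. L$l$q * a$l))"
    by (simp add: sum_product)
  also have "\<dots> = (norm (transpose L *v a))\<^sup>2"
    by (simp add: power2_norm_eq_inner inner_vec_def matrix_vector_mult_def transpose_def)
  finally show ?thesis .
qed

lemma directional_derivative_unique_within:
  fixes f :: "'a::real_normed_vector \<Rightarrow> real" and g :: "real \<Rightarrow> 'b::real_normed_vector"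
  assumes f: "(f has_derivative f') (at x)"
    and h: "(h has_derivative h') (at (g 0) within S)"
    and g: "(g has_derivative g') (at 0)"
    and \<delta>: "0 < \<delta>" and gS: "g ` {-\<delta>..0} \<subseteq> S"
    and fg: "\<And>t. t \<in> {-\<delta>..0} \<Longrightarrow> f (x + t *\<^sub>R e) = h (g t)"
  shows "f' e = h' (g' 1)"
proof -
  have "((h \<circ> g) has_derivative (h' \<circ> g')) (at 0 within {-\<delta>..0})"
    by (rule diff_chain_within[OF has_derivative_at_withinI[OF g] has_derivative_subset[OF h gS]])
  then have hg: "((\<lambda>t. f (x + t *\<^sub>R e)) has_derivative (h' \<circ> g')) (at 0 within {-\<delta>..0})"
    by (rule has_derivative_transform_within[OF _ zero_less_one]) (use \<delta> fg in auto)
  have "((\<lambda>t. x + t *\<^sub>R e) has_derivative (\<lambda>t. t *\<^sub>R e)) (at 0 within {-\<delta>..0})"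
    by (auto intro!: derivative_eq_intros)
  from diff_chain_within[OF this, of f f'] f
  have fl: "((\<lambda>t. f (x + t *\<^sub>R e)) has_derivative (\<lambda>t. f' (t *\<^sub>R e))) (at 0 within {-\<delta>..0})"
    by (simp add: o_def has_derivative_at_withinI)
  have "(\<lambda>t. f' (t *\<^sub>R e)) = h' \<circ> g'"
    using fl hg \<delta> unfolding cbox_interval[symmetric]
    by (intro frechet_derivative_unique_within_closed_interval[of "-\<delta>" 0 0]) auto
  then show ?thesis by (metis comp_apply scale_one)
qed

lemma partial_derivative_Phi_Gam:
  fixes \<mu> :: "real^'d::finite" and H :: "real^'p::finite^'p" and L :: "real^'q::finite^'p"
  assumes H: "transpose (matrix_inv H) = matrix_inv H"
    and \<mu>: "\<mu> \<in> M_dom d n"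
    and D\<Phi>: "matrix_deriv \<Phi> \<phi> (Gam d H \<psi> \<mu>)"
    and L: "\<phi> (Gam d H \<psi> \<mu>) = L ** transpose L"
    and df: "((\<lambda>\<mu>. \<Phi> (Gam d H \<psi> \<mu>)) has_derivative f') (at \<mu>)"
  shows "f' (axis i 1) = - (norm (transpose L *v (matrix_inv H *v \<psi> i)))\<^sup>2 / (\<mu> $ i)\<^sup>2"
proof -
  define P where "P j = outer (matrix_inv H *v \<psi> j)" for j
  define g where "g t = (\<Sum>j\<in>UNIV. design_weight d (\<mu> $ j + t * axis i 1 $ j) *\<^sub>R P j)" for t
  define g' where "g' t = (\<Sum>j\<in>UNIV. (- axis i 1 $ j / (\<mu> $ j)\<^sup>2 * t) *\<^sub>R P j)" for t
  have pos: "0 < \<mu> $ j" and le1: "d = PO_WOR \<Longrightarrow> \<mu> $ j \<le> 1" for j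
    using \<mu> by (auto simp: M_dom_def)
  have g_Gam: "g t = Gam d H \<psi> (\<mu> + t *\<^sub>R axis i 1)" for t
    by (simp add: g_def P_def Gam_eq_sum_outer[OF H])
  have "(g has_derivative g') (at 0)"
    unfolding g_def g'_def
    by (intro has_derivative_sum has_derivative_scaleR_left has_field_derivative_imp_has_derivative
        has_field_derivative_design_weight pos)
  moreover have "g ` {-\<mu> $ i / 2..0} \<subseteq> {A. psd A}"
  proof (clarsimp simp: g_Gam)
    fix t assume "- (\<mu> $ i / 2) \<le> t" "t \<le> 0"
    then have "0 < \<mu> $ i + t" "d = PO_WOR \<Longrightarrow> \<mu> $ i + t \<le> 1"
      using pos[of i] le1[of i] by auto
    then show "psd (Gam d H \<psi> (\<mu> + t *\<^sub>R axis i 1))"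
      using pos le1 by (intro psd_Gam[OF H]) (auto simp: axis_def)
  qed
  moreover have "g 0 = Gam d H \<psi> \<mu>"
    by (simp add: g_Gam)
  ultimately have "f' (axis i 1) = (\<Sum>k\<in>UNIV. \<Sum>l\<in>UNIV. \<phi> (Gam d H \<psi> \<mu>) $ k $ l * g' 1 $ k $ l)"
    using D\<Phi> pos[of i] unfolding matrix_deriv_def
    by (intro directional_derivative_unique_within[OF df, where g = g]) (auto simp: g_Gam)
  also have "g' 1 = (- 1 / (\<mu> $ i)\<^sup>2) *\<^sub>R P i"
    by (simp add: g'_def axis_def if_distrib if_distribR cong: if_cong)
  also have "(\<Sum>k\<in>UNIV. \<Sum>l\<in>UNIV. \<phi> (Gam d H \<psi> \<mu>) $ k $ l * ((- 1 / (\<mu> $ i)\<^sup>2) *\<^sub>R P i) $ k $ l)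
      = - 1 / (\<mu> $ i)\<^sup>2 * (\<Sum>k\<in>UNIV. \<Sum>l\<in>UNIV. (L ** transpose L) $ k $ l * P i $ k $ l)"
    by (simp add: L sum_distrib_left mult_ac)
  finally show ?thesis
    by (simp only: P_def frobenius_mult_transpose_outer) simp
qed

lemma convex_on_has_derivative_above_tangent:
  fixes f :: "'a::real_normed_vector \<Rightarrow> real"
  assumes cvx: "convex_on S f" and x: "x \<in> S" and y: "y \<in> S"
    and df: "(f has_derivative f') (at x)"
  shows "f x + f' (y - x) \<le> f y"
proof -
  define g where "g t = f (x + t *\<^sub>R (y - x))" for t
  have "((\<lambda>t. x + t *\<^sub>R (y - x)) has_derivative (\<lambda>t. t *\<^sub>R (y - x))) (at 0)"
    by (auto intro!: derivative_eq_intros)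
  from diff_chain_at[OF this, of f f'] df
  have "(g has_derivative (\<lambda>t. f' (t *\<^sub>R (y - x)))) (at 0)"
    unfolding g_def by (simp add: o_def)
  then have "(g has_field_derivative f' (y - x)) (at 0)"
    by (simp add: has_field_derivative_def linear_cmul[OF has_derivative_linear[OF df]] mult_commute_abs)
  then have "(g has_field_derivative f' (y - x)) (at 0 within {0<..})"
    by (rule has_field_derivative_at_within)
  then have "((\<lambda>t. (g t - g 0) / (t - 0)) \<longlongrightarrow> f' (y - x)) (at_right 0)"
    by (simp add: has_field_derivative_iff)
  moreover have "eventually (\<lambda>t. (g t - g 0) / (t - 0) \<le> f y - f x) (at_right 0)"
    using eventually_at_right_real[OF zero_less_one]
  proof eventually_elim
    case (elim t)
    then have t: "0 < t" "t < 1" by auto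
    have "x + t *\<^sub>R (y - x) = (1 - t) *\<^sub>R x + t *\<^sub>R y" by (simp add: algebra_simps)
    then have "g t \<le> (1 - t) * f x + t * f y"
      using convex_onD[OF cvx, of t x y] t x y by (simp add: g_def)
    then have "g t - g 0 \<le> t * (f y - f x)"
      by (simp add: g_def algebra_simps)
    then show ?case using t by (simp add: divide_le_eq mult.commute)
  qed
  ultimately have "f' (y - x) \<le> f y - f x"
    by (rule tendsto_upperbound) simp
  then show ?thesis by simp
qed

lemma linear_sum_axis:
  assumes "linear f"
  shows "f (x::real^'d::finite) = (\<Sum>i\<in>UNIV. x $ i * f (axis i 1))"
proof -
  have "f x = f (\<Sum>i\<in>UNIV. x $ i *\<^sub>R axis i 1)"
    using basis_expansion[of x] by (simp add: scalar_mult_eq_scaleR)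
  then show ?thesis
    by (simp add: linear_sum[OF assms] linear_cmul[OF assms])
qed

lemma kkt_imp_minimum_convex_on:
  fixes f :: "real^'d::finite \<Rightarrow> real"
  assumes cvx: "convex_on S f" and x: "x \<in> S" and y: "y \<in> S"
    and df: "(f has_derivative f') (at x)"
    and stat: "\<And>i. f' (axis i 1) + lam + \<nu> i = 0"
    and \<nu>: "\<And>i. 0 \<le> \<nu> i"
    and active: "\<And>i. \<nu> i \<noteq> 0 \<Longrightarrow> y $ i \<le> x $ i"
    and sum_eq: "(\<Sum>i\<in>UNIV. y $ i) = (\<Sum>i\<in>UNIV. x $ i)"
  shows "f x \<le> f y"
proof -
  have "(y $ i - x $ i) * \<nu> i \<le> 0" for i
    using active[of i] \<nu>[of i] by (cases "\<nu> i = 0") (auto intro: mult_nonpos_nonneg)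
  then have "0 \<le> - (\<Sum>i\<in>UNIV. (y $ i - x $ i) * \<nu> i)"
    by (simp add: sum_nonpos)
  also have "\<dots> = (\<Sum>i\<in>UNIV. (y $ i - x $ i) * (- lam - \<nu> i))"
    using sum_eq by (simp add: algebra_simps sum.distrib sum_subtractf sum_distrib_left[symmetric])
  also have "\<dots> = f' (y - x)"
  proof -
    have "f' (axis i 1) = - lam - \<nu> i" for i
      using stat[of i] by linarith
    then show ?thesis
      by (simp add: linear_sum_axis[OF has_derivative_linear[OF df], of "y - x"])
  qed
  finally show ?thesis
    using convex_on_has_derivative_above_tangent[OF cvx x y df] by linarith
qed

definition sqrt_allocation :: "real \<Rightarrow> ('d::finite \<Rightarrow> real) \<Rightarrow> real^'d \<Rightarrow> bool" where
  "sqrt_allocation n c \<mu> \<longleftrightarrow> (\<forall>i. \<mu> $ i = n * sqrt (c i) / (\<Sum>j\<in>UNIV. sqrt (c j)))"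

definition capped_sqrt_allocation :: "real \<Rightarrow> ('d::finite \<Rightarrow> real) \<Rightarrow> real^'d \<Rightarrow> bool" where
  "capped_sqrt_allocation n c \<mu> \<longleftrightarrow>
     (let E = {i. \<mu> $ i = 1} in
       (\<forall>i. \<mu> $ i \<le> 1) \<and>
       (\<forall>i\<in>- E. \<mu> $ i = (n - real (card E)) * sqrt (c i) / (\<Sum>j\<in>- E. sqrt (c j))) \<and>
       (\<forall>i\<in>E. \<forall>j\<in>- E. sqrt (c i) \<ge> sqrt (c j) / \<mu> $ j))"

lemma sqrt_allocation_multiplier:
  assumes alloc: "sqrt_allocation n c \<mu>"
    and pos: "\<And>i. 0 < \<mu> $ i" and c: "\<And>i. 0 \<le> c i" and n: "0 < n"
  shows "c i / (\<mu> $ i)\<^sup>2 = (\<Sum>j\<in>UNIV. sqrt (c j))\<^sup>2 / n\<^sup>2"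
proof -
  define s where "s = (\<Sum>j\<in>UNIV. sqrt (c j))"
  have \<mu>: "\<mu> $ i = n * sqrt (c i) / s" for i
    using alloc by (simp add: sqrt_allocation_def s_def)
  have "s \<noteq> 0"
    using \<mu>[of i] pos[of i] by auto
  then have "sqrt (c i) = \<mu> $ i * s / n"
    using \<mu>[of i] n by (simp add: field_simps)
  then have "c i = (\<mu> $ i * s / n)\<^sup>2"
    by (metis c real_sqrt_pow2)
  then show ?thesis
    using pos[of i] n by (simp add: s_def power_mult_distrib field_simps)
qed

lemma capped_sqrt_allocation_multipliers:
  assumes alloc: "capped_sqrt_allocation n c \<mu>"
    and pos: "\<And>i. 0 < \<mu> $ i" and c: "\<And>i. 0 \<le> c i"
  shows "\<exists>lam \<nu>. \<forall>i. 0 \<le> \<nu> i \<and> \<nu> i * (\<mu> $ i - 1) = 0 \<and> c i / (\<mu> $ i)\<^sup>2 = lam + \<nu> i"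
proof -
  define E where "E = {i. \<mu> $ i = 1}"
  define K where "K = (n - real (card E)) / (\<Sum>j\<in>- E. sqrt (c j))"
  have \<mu>: "\<mu> $ i = K * sqrt (c i)" if "i \<notin> E" for i
    using alloc that unfolding capped_sqrt_allocation_def Let_def E_def[symmetric] K_def by auto
  have dominant: "sqrt (c j) / \<mu> $ j \<le> sqrt (c i)" if "i \<in> E" "j \<notin> E" for i j
    using alloc that unfolding capped_sqrt_allocation_def Let_def E_def[symmetric] by (meson ComplI)
  show ?thesis
  proof (cases "E = UNIV")
    case True
    then show ?thesis
      by (intro exI[of _ 0] exI[of _ "\<lambda>i. c i / (\<mu> $ i)\<^sup>2"]) (auto simp: E_def c)
  next
    case False
    then obtain j where j: "j \<notin> E" by auto
    have K: "0 < K"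
      using \<mu>[OF j] pos[of j] c[of j] by (auto simp: zero_less_mult_iff)
    have ratio: "sqrt (c k) / \<mu> $ k = 1 / K" if "k \<notin> E" for k
    proof -
      have "0 < sqrt (c k)"
        using \<mu>[OF that] pos[of k] K by (simp add: zero_less_mult_iff)
      then show ?thesis using \<mu>[OF that] K by simp
    qed
    define \<nu> where "\<nu> i = (if i \<in> E then c i / (\<mu> $ i)\<^sup>2 - (1 / K)\<^sup>2 else 0)" for i
    have "0 \<le> \<nu> i \<and> \<nu> i * (\<mu> $ i - 1) = 0 \<and> c i / (\<mu> $ i)\<^sup>2 = (1 / K)\<^sup>2 + \<nu> i" for i
    proof (cases "i \<in> E")
      case True
      have "1 / K \<le> sqrt (c i)"
        using dominant[OF True j] ratio[OF j] by simp
      then have "(1 / K)\<^sup>2 \<le> c i"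
        using K c[of i] by (metis less_eq_real_def power_mono real_sqrt_pow2 zero_less_divide_1_iff)
      then show ?thesis
        using True by (simp add: \<nu>_def E_def)
    next
      case False
      have "c i / (\<mu> $ i)\<^sup>2 = (sqrt (c i) / \<mu> $ i)\<^sup>2"
        using c[of i] by (simp add: power_divide)
      then show ?thesis
        using ratio[OF False] False by (simp add: \<nu>_def)
    qed
    then show ?thesis by blast
  qed
qed

lemma optimal_allocation_multipliers:
  assumes "d \<in> {PO_WR, MULTI} \<and> sqrt_allocation n c \<mu> \<or> d = PO_WOR \<and> capped_sqrt_allocation n c \<mu>"
    and pos: "\<And>i. 0 < \<mu> $ i" and c: "\<And>i. 0 \<le> c i" and n: "0 < n"
  shows "\<exists>lam \<nu>. \<forall>i. 0 \<le> \<nu> i \<and> \<nu> i * (\<mu> $ i - 1) = 0 \<and> (d \<noteq> PO_WOR \<longrightarrow> \<nu> i = 0)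
    \<and> c i / (\<mu> $ i)\<^sup>2 = lam + \<nu> i"
  using assms(1)
proof (elim disjE conjE)
  assume "d \<in> {PO_WR, MULTI}" and alloc: "sqrt_allocation n c \<mu>"
  then show ?thesis
    using sqrt_allocation_multiplier[OF alloc pos c n]
    by (intro exI[of _ "(\<Sum>j\<in>UNIV. sqrt (c j))\<^sup>2 / n\<^sup>2"] exI[of _ "\<lambda>_. 0"]) auto
next
  assume "d = PO_WOR" and alloc: "capped_sqrt_allocation n c \<mu>"
  then show ?thesis
    using capped_sqrt_allocation_multipliers[OF alloc pos c] by auto
qed

lemma multipliers_imp_stationary_and_minimum:
  fixes f :: "real^'d::finite \<Rightarrow> real"
  assumes x: "x \<in> M_dom d n" and df: "(f has_derivative f') (at x)"
    and \<nu>: "\<And>i. 0 \<le> \<nu> i" "\<And>i. \<nu> i * (x $ i - 1) = 0" "\<And>i. d \<noteq> PO_WOR \<Longrightarrow> \<nu> i = 0"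
    and stat: "\<And>i. f' (axis i 1) + lam + \<nu> i = 0"
  shows "(d \<noteq> PO_WOR \<longrightarrow> lagrange_stationary f x)
    \<and> (d = PO_WOR \<longrightarrow> kkt_stationary f n x)
    \<and> (convex_on (M_dom d n) f \<longrightarrow> (\<forall>y\<in>M_dom d n. f x \<le> f y))"
proof (intro conjI impI ballI)
  assume "d \<noteq> PO_WOR"
  then show "lagrange_stationary f x"
    using df stat \<nu>(3) unfolding lagrange_stationary_def by fastforce
next
  assume "d = PO_WOR"
  then show "kkt_stationary f n x"
    using x df stat \<nu> unfolding kkt_stationary_def M_dom_def by blast
next
  fix y :: "real^'d" assume cvx: "convex_on (M_dom d n) f" and y: "y \<in> M_dom d n"
  have "y $ i \<le> x $ i" if "\<nu> i \<noteq> 0" for i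
  proof -
    have "x $ i = 1" "d = PO_WOR"
      using that \<nu>(2,3)[of i] by auto
    then show ?thesis
      using y by (simp add: M_dom_def)
  qed
  moreover have "(\<Sum>i\<in>UNIV. y $ i) = (\<Sum>i\<in>UNIV. x $ i)"
    using x y by (simp add: M_dom_def)
  ultimately show "f x \<le> f y"
    by (rule kkt_imp_minimum_convex_on[OF cvx x y df stat \<nu>(1)])
qed

theorem proposition1:
  fixes d :: design
    and \<psi> :: "'d::finite \<Rightarrow> real^'p::finite"
    and H :: "real^'p^'p"
    and n :: real
    and \<Phi> :: "real^'p^'p \<Rightarrow> real"
    and \<phi> :: "real^'p^'p \<Rightarrow> real^'p^'p"
    and \<mu>s :: "real^'d"
    and L :: "real^'q::finite^'p"
    and c :: "'d \<Rightarrow> real"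
  assumes H_sym: "transpose H = H"
    and H_inv: "invertible H"
    and n_pos: "0 < n"
    and mono: "loewner_mono \<Phi>"
    and deriv: "\<And>U. psd U \<Longrightarrow> matrix_deriv \<Phi> \<phi> U"
    and mus_in: "\<mu>s \<in> M_dom d n"
    and nbhd: "\<exists>S. open S \<and> \<mu>s \<in> S \<and>
                 (\<forall>\<mu>\<in>S. (\<lambda>\<mu>. \<Phi> (Gam d H \<psi> \<mu>)) differentiable (at \<mu>))"
    and L_fact: "L ** transpose L = \<phi> (Gam d H \<psi> \<mu>s)"
    and c_def: "\<And>i. c i = (norm (transpose L *v (matrix_inv H *v \<psi> i)))\<^sup>2"
  shows
    "(d \<in> {PO_WR, MULTI} \<longrightarrow>
        (\<forall>i. \<mu>s $ i = n * sqrt (c i) / (\<Sum>j\<in>UNIV. sqrt (c j))) \<longrightarrow>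
        lagrange_stationary (\<lambda>\<mu>. \<Phi> (Gam d H \<psi> \<mu>)) \<mu>s)
   \<and> (d = PO_WOR \<longrightarrow>
        (let E = {i. \<mu>s $ i = 1} in
          (\<forall>i. \<mu>s $ i \<le> 1) \<and>
          (\<forall>i\<in>- E. \<mu>s $ i = (n - real (card E)) * sqrt (c i) / (\<Sum>j\<in>- E. sqrt (c j))) \<and>
          (\<forall>i\<in>E. \<forall>j\<in>- E. sqrt (c i) \<ge> sqrt (c j) / \<mu>s $ j)) \<longrightarrow>
        kkt_stationary (\<lambda>\<mu>. \<Phi> (Gam d H \<psi> \<mu>)) n \<mu>s)
   \<and> (((d \<in> {PO_WR, MULTI} \<and> (\<forall>i. \<mu>s $ i = n * sqrt (c i) / (\<Sum>j\<in>UNIV. sqrt (c j))))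
        \<or> (d = PO_WOR \<and>
            (let E = {i. \<mu>s $ i = 1} in
              (\<forall>i. \<mu>s $ i \<le> 1) \<and>
              (\<forall>i\<in>- E. \<mu>s $ i = (n - real (card E)) * sqrt (c i) / (\<Sum>j\<in>- E. sqrt (c j))) \<and>
              (\<forall>i\<in>E. \<forall>j\<in>- E. sqrt (c i) \<ge> sqrt (c j) / \<mu>s $ j))))
       \<longrightarrow> convex_on (M_dom d n) (\<lambda>\<mu>. \<Phi> (Gam d H \<psi> \<mu>))
       \<longrightarrow> (\<forall>\<mu>\<in>M_dom d n. \<Phi> (Gam d H \<psi> \<mu>s) \<le> \<Phi> (Gam d H \<psi> \<mu>)))"
proof -
  let ?f = "\<lambda>\<mu>. \<Phi> (Gam d H \<psi> \<mu>)"
  have H: "transpose (matrix_inv H) = matrix_inv H"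
    using H_sym H_inv by (rule symmetric_matrix_inv)
  have pos: "\<And>i. 0 < \<mu>s $ i" and le1: "\<And>i. d = PO_WOR \<Longrightarrow> \<mu>s $ i \<le> 1"
    using mus_in by (auto simp: M_dom_def)
  have c_nonneg: "\<And>i. 0 \<le> c i" by (simp add: c_def)
  obtain f' where df: "(?f has_derivative f') (at \<mu>s)"
    using nbhd by (auto simp: differentiable_def)
  have "psd (Gam d H \<psi> \<mu>s)"
    using pos le1 by (intro psd_Gam[OF H]) auto
  with partial_derivative_Phi_Gam[OF H mus_in deriv L_fact[symmetric] df]
  have grad: "\<And>i. f' (axis i 1) = - c i / (\<mu>s $ i)\<^sup>2"
    by (simp add: c_def)
  have certificate: "(d \<noteq> PO_WOR \<longrightarrow> lagrange_stationary ?f \<mu>s)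
      \<and> (d = PO_WOR \<longrightarrow> kkt_stationary ?f n \<mu>s)
      \<and> (convex_on (M_dom d n) ?f \<longrightarrow> (\<forall>\<mu>\<in>M_dom d n. ?f \<mu>s \<le> ?f \<mu>))"
    if alloc: "d \<in> {PO_WR, MULTI} \<and> sqrt_allocation n c \<mu>s \<or> d = PO_WOR \<and> capped_sqrt_allocation n c \<mu>s"
  proof -
    obtain lam \<nu> where "\<forall>i. 0 \<le> \<nu> i \<and> \<nu> i * (\<mu>s $ i - 1) = 0 \<and> (d \<noteq> PO_WOR \<longrightarrow> \<nu> i = 0)
        \<and> c i / (\<mu>s $ i)\<^sup>2 = lam + \<nu> i"
      using optimal_allocation_multipliers[OF alloc pos c_nonneg n_pos] by blast
    then show ?thesis
      by (intro multipliers_imp_stationary_and_minimum[OF mus_in df, where \<nu> = \<nu> and lam = lam])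
        (auto simp: grad)
  qed
  show ?thesis
    unfolding sqrt_allocation_def[symmetric] capped_sqrt_allocation_def[symmetric]
    using certificate by auto
qed

end
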